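(* For any nonempty metric spaces $X$ and $Y$, $d_{GH}(X,Y)=d^{ls}_{GH}(X,Y)$.
   Context: For a metric space, $|xy|$ denotes the distance between $x$ and $y$. A set-valued map $f:X\rightrightarrows Y$ assigns to each $x\in X$ a nonempty subset $f(x)\subseteq Y$; it is identified with its graph $\bigcup_{x\in X}\{x\}\times f(x)\subseteq X\times Y$. A correspondence between $X$ and $Y$ is a subset $R\subseteq X\times Y$ whose projections to $X$ and to $Y$ are both surjective; it is regarded as the set-valued map $x\mapsto R(x)=\{y:(x,y)\in R\}$, and $R^{-1}=\{(y,x):(x,y)\in R\}$ is a correspondence between $Y$ and $X$. $\mathcal R(X,Y)$ is the set of all correspondences. The distortion of a nonempty relation $\sigma\subseteq X\times Y$ is $\operatorname{dis}\sigma=\sup\{||xx'|-|yy'||:(x,y),(x',y')\in\sigma\}\in[0,\infty]$. The Gromov–Hausdorff distance is $d_{GH}(X,Y)=\frac12\inf\{\operatorname{dis}R:R\in\mathcal R(X,Y)\}$ (this agrees with the usual definition via isometric embeddings). A set-valued map $f:X\rightrightarrows Y$ of topological spaces is lower semicontinuous if for every $x\in X$ and every open $U\subseteq Y$ with $f(x)\cap U\neq\emptyset$ there is a neighborhood $V$ of $x$ with $f(x')\cap U\ne\emptyset$ for all $x'\in V$. $\mathcal R_{ls}(X,Y)$ is the set of $R\in\mathcal R(X,Y)$ such that both $R:X\rightrightarrows Y$ and $R^{-1}:Y\rightrightarrows X$ are lower semicontinuous, and $d^{ls}_{GH}(X,Y)=\frac12\inf\{\operatorname{dis}R:R\in\mathcal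 R_{ls}(X,Y)\}$. *)

theory Defs
  imports "HOL-Analysis.Analysis"
begin

definition correspondence :: "'a set \<Rightarrow> 'b set \<Rightarrow> ('a \<times> 'b) set \<Rightarrow> bool" where
  "correspondence X Y R \<longleftrightarrow> R \<subseteq> X \<times> Y \<and> fst ` R = X \<and> snd ` R = Y"

definition distortion :: "('a \<Rightarrow> 'a \<Rightarrow> real) \<Rightarrow> ('b \<Rightarrow> 'b \<Rightarrow> real) \<Rightarrow> ('a \<times> 'b) set \<Rightarrow> ereal" where
  "distortion dX dY \<sigma> =
     (SUP p \<in> \<sigma> \<times> \<sigma>. ereal \<bar>dX (fst (fst p)) (fst (snd p)) - dY (snd (fst p)) (snd (snd p))\<bar>)"

definition lsc_setvalued :: "'a topology \<Rightarrow> 'b topology \<Rightarrow> ('a \<times> 'b) set \<Rightarrow> bool" where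
  "lsc_setvalued T S R \<longleftrightarrow>
     (\<forall>x \<in> topspace T. \<forall>U. openin S U \<and> R `` {x} \<inter> U \<noteq> {} \<longrightarrow>
        (\<exists>V. openin T V \<and> x \<in> V \<and> (\<forall>x' \<in> V. R `` {x'} \<inter> U \<noteq> {})))"

definition GH_dist :: "'a set \<Rightarrow> ('a \<Rightarrow> 'a \<Rightarrow> real) \<Rightarrow> 'b set \<Rightarrow> ('b \<Rightarrow> 'b \<Rightarrow> real) \<Rightarrow> ereal" where
  "GH_dist X dX Y dY = ereal (1/2) * (INF R \<in> {R. correspondence X Y R}. distortion dX dY R)"

definition GH_dist_ls :: "'a set \<Rightarrow> ('a \<Rightarrow> 'a \<Rightarrow> real) \<Rightarrow> 'b set \<Rightarrow> ('b \<Rightarrow> 'b \<Rightarrow> real) \<Rightarrow> ereal" where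
  "GH_dist_ls X dX Y dY = ereal (1/2) *
     (INF R \<in> {R. correspondence X Y R
                  \<and> lsc_setvalued (Metric_space.mtopology X dX) (Metric_space.mtopology Y dY) R
                  \<and> lsc_setvalued (Metric_space.mtopology Y dY) (Metric_space.mtopology X dX) (converse R)}.
        distortion dX dY R)"

end

theory Submission
  imports Defs
begin

text \<open>Every correspondence R can be replaced by its open \<open>\<epsilon>\<close>-thickening, the set of pairs
  (x, y) that are \<open>\<epsilon>\<close>-close in both coordinates to some pair of R. The thickening is again a
  correspondence, its distortion exceeds that of R by at most \<open>4\<epsilon>\<close>, and it is lower
  semicontinuous in both directions because its fibre over x contains the fibre over any point
  sufficiently near x. Letting \<open>\<epsilon> \<rightarrow> 0\<close> shows that the two infima coincide.\<close>

lemma (in Metric_space) mdist_quadrilateral: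
  assumes "x \<in> M" "x' \<in> M" "a \<in> M" "a' \<in> M"
  shows "\<bar>d x x' - d a a'\<bar> \<le> d x a + d x' a'"
  using triangle[of x a x'] triangle[of a a' x'] triangle[of a x a'] triangle[of x x' a']
    commute[of x a] commute[of x' a'] assms
  by (simp add: abs_le_iff)

lemma le_distortion:
  assumes "(x, y) \<in> \<sigma>" "(x', y') \<in> \<sigma>"
  shows "ereal \<bar>dX x x' - dY y y'\<bar> \<le> distortion dX dY \<sigma>"
  unfolding distortion_def by (rule SUP_upper2[of "((x, y), (x', y'))"]) (use assms in auto)

lemma distortion_le:
  assumes "\<And>x y x' y'. (x, y) \<in> \<sigma> \<Longrightarrow> (x', y') \<in> \<sigma> \<Longrightarrow> ereal \<bar>dX x x' - dY y y'\<bar> \<le> c"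
  shows "distortion dX dY \<sigma> \<le> c"
  unfolding distortion_def by (rule SUP_least) (use assms in auto)

definition thickening ::
    "'a set \<Rightarrow> ('a \<Rightarrow> 'a \<Rightarrow> real) \<Rightarrow> 'b set \<Rightarrow> ('b \<Rightarrow> 'b \<Rightarrow> real) \<Rightarrow> ('a \<times> 'b) set \<Rightarrow> real
      \<Rightarrow> ('a \<times> 'b) set" where
  "thickening X dX Y dY R e =
     {(x, y). x \<in> X \<and> y \<in> Y \<and> (\<exists>(a, b) \<in> R. dX x a < e \<and> dY y b < e)}"

lemma converse_thickening:
  "converse (thickening X dX Y dY R e) = thickening Y dY X dX (converse R) e"
  unfolding thickening_def by auto

lemma subset_thickening:
  assumes "Metric_space X dX" "Metric_space Y dY" "R \<subseteq> X \<times> Y" "e > 0"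
  shows "R \<subseteq> thickening X dX Y dY R e"
proof safe
  fix a b assume "(a, b) \<in> R"
  with assms(3) have "a \<in> X" "b \<in> Y" by auto
  then have "dX a a = 0" "dY b b = 0"
    using Metric_space.mdist_zero[OF assms(1)] Metric_space.mdist_zero[OF assms(2)] by simp_all
  with \<open>a \<in> X\<close> \<open>b \<in> Y\<close> \<open>(a, b) \<in> R\<close> \<open>e > 0\<close> show "(a, b) \<in> thickening X dX Y dY R e"
    unfolding thickening_def by (auto intro!: bexI[of _ "(a, b)"])
qed

lemma correspondence_thickening:
  assumes "Metric_space X dX" "Metric_space Y dY" "correspondence X Y R" "e > 0"
  shows "correspondence X Y (thickening X dX Y dY R e)"
proof -
  let ?T = "thickening X dX Y dY R e"
  have "R \<subseteq> X \<times> Y" using assms(3) unfolding correspondence_def by simp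
  then have "R \<subseteq> ?T" using subset_thickening[OF assms(1,2) _ assms(4)] by simp
  have T: "?T \<subseteq> X \<times> Y" unfolding thickening_def by auto
  have "X \<subseteq> fst ` ?T" "Y \<subseteq> snd ` ?T"
    using assms(3) image_mono[OF \<open>R \<subseteq> ?T\<close>, of fst] image_mono[OF \<open>R \<subseteq> ?T\<close>, of snd]
    unfolding correspondence_def by simp_all
  moreover have "fst ` ?T \<subseteq> X" "snd ` ?T \<subseteq> Y" using T by auto
  ultimately show ?thesis unfolding correspondence_def using T by blast
qed

lemma lsc_setvalued_thickening:
  assumes MX: "Metric_space X dX" and R: "R \<subseteq> X \<times> Y"
  shows "lsc_setvalued (Metric_space.mtopology X dX) T (thickening X dX Y dY R e)"
  unfolding lsc_setvalued_def
proof (intro ballI allI impI)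
  let ?R\<^sub>e = "thickening X dX Y dY R e"
  fix x U
  assume "openin T U \<and> ?R\<^sub>e `` {x} \<inter> U \<noteq> {}"
  then obtain y a b where y: "y \<in> U" "x \<in> X" "y \<in> Y" and ab: "(a, b) \<in> R" "dX x a < e" "dY y b < e"
    unfolding thickening_def by auto
  have "a \<in> X" using ab R by auto
  show "\<exists>V. openin (Metric_space.mtopology X dX) V \<and> x \<in> V \<and> (\<forall>x' \<in> V. ?R\<^sub>e `` {x'} \<inter> U \<noteq> {})"
  proof (intro exI conjI ballI)
    show "openin (Metric_space.mtopology X dX) (Metric_space.mball X dX x (e - dX x a))"
      using Metric_space.openin_mball[OF MX] by blast
    show "x \<in> Metric_space.mball X dX x (e - dX x a)"
      using Metric_space.centre_in_mball_iff[OF MX] y ab by auto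
    fix x' assume "x' \<in> Metric_space.mball X dX x (e - dX x a)"
    then have "x' \<in> X" "dX x x' < e - dX x a"
      using Metric_space.in_mball[OF MX] by auto
    moreover have "dX x' a \<le> dX x x' + dX x a"
      using Metric_space.triangle''[OF MX \<open>x' \<in> X\<close> \<open>x \<in> X\<close> \<open>a \<in> X\<close>] .
    ultimately have "(x', y) \<in> ?R\<^sub>e"
      unfolding thickening_def using y ab by (auto intro!: bexI[of _ "(a, b)"])
    with y show "?R\<^sub>e `` {x'} \<inter> U \<noteq> {}" by auto
  qed
qed

lemma distortion_thickening_le:
  assumes MX: "Metric_space X dX" and MY: "Metric_space Y dY" and R: "R \<subseteq> X \<times> Y"
  shows "distortion dX dY (thickening X dX Y dY R e) \<le> distortion dX dY R + ereal (4 * e)"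
proof (rule distortion_le)
  fix x y x' y'
  assume "(x, y) \<in> thickening X dX Y dY R e" "(x', y') \<in> thickening X dX Y dY R e"
  then obtain a b a' b' where
    xy: "x \<in> X" "y \<in> Y" "(a, b) \<in> R" "dX x a < e" "dY y b < e" and
    xy': "x' \<in> X" "y' \<in> Y" "(a', b') \<in> R" "dX x' a' < e" "dY y' b' < e"
    unfolding thickening_def by auto
  have "a \<in> X" "b \<in> Y" "a' \<in> X" "b' \<in> Y" using xy xy' R by auto
  then have "\<bar>dX x x' - dX a a'\<bar> \<le> 2 * e" "\<bar>dY y y' - dY b b'\<bar> \<le> 2 * e"
    using Metric_space.mdist_quadrilateral[OF MX, of x x' a a']
      Metric_space.mdist_quadrilateral[OF MY, of y y' b b'] xy xy' by auto
  then have "ereal \<bar>dX x x' - dY y y'\<bar> \<le> ereal \<bar>dX a a' - dY b b'\<bar> + ereal (4 * e)"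
    by simp
  also have "\<dots> \<le> distortion dX dY R + ereal (4 * e)"
    using le_distortion[OF xy(3) xy'(3)] by (rule add_right_mono)
  finally show "ereal \<bar>dX x x' - dY y y'\<bar> \<le> distortion dX dY R + ereal (4 * e)" .
qed

lemma INF_eq_INF_subset_approx:
  fixes f :: "'a \<Rightarrow> ereal"
  assumes "B \<subseteq> A" and "\<And>R e. R \<in> A \<Longrightarrow> e > 0 \<Longrightarrow> \<exists>T \<in> B. f T \<le> f R + ereal e"
  shows "(INF R \<in> A. f R) = (INF R \<in> B. f R)"
proof (rule antisym)
  show "(INF R \<in> A. f R) \<le> (INF R \<in> B. f R)"
    using assms(1) by (rule INF_superset_mono) simp
  show "(INF R \<in> B. f R) \<le> (INF R \<in> A. f R)"
  proof (rule INF_greatest, rule ereal_le_epsilon2)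
    fix R e assume "R \<in> A" "(0::real) < e"
    then obtain T where "T \<in> B" "f T \<le> f R + ereal e" using assms(2) by blast
    then show "(INF R \<in> B. f R) \<le> f R + ereal e" by (meson INF_lower order_trans)
  qed
qed

theorem mainTheorem1:
  fixes X :: "'a set" and dX :: "'a \<Rightarrow> 'a \<Rightarrow> real"
    and Y :: "'b set" and dY :: "'b \<Rightarrow> 'b \<Rightarrow> real"
  assumes "Metric_space X dX" and "Metric_space Y dY"
    and "X \<noteq> {}" and "Y \<noteq> {}"
  shows "GH_dist X dX Y dY = GH_dist_ls X dX Y dY"
  unfolding GH_dist_def GH_dist_ls_def
proof (intro arg_cong[where f = "(*) _"] INF_eq_INF_subset_approx)
  fix R and e :: real
  assume "R \<in> {R. correspondence X Y R}" "e > 0"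
  then have C: "correspondence X Y R" and R: "R \<subseteq> X \<times> Y" and R': "converse R \<subseteq> Y \<times> X"
    unfolding correspondence_def by auto
  let ?T = "thickening X dX Y dY R (e / 4)"
  have "correspondence X Y ?T"
    using correspondence_thickening[OF assms(1,2) C] \<open>e > 0\<close> by simp
  moreover have "lsc_setvalued (Metric_space.mtopology X dX) (Metric_space.mtopology Y dY) ?T"
    using lsc_setvalued_thickening[OF assms(1) R] .
  moreover have "lsc_setvalued (Metric_space.mtopology Y dY) (Metric_space.mtopology X dX) (converse ?T)"
    unfolding converse_thickening using lsc_setvalued_thickening[OF assms(2) R'] .
  moreover have "distortion dX dY ?T \<le> distortion dX dY R + ereal e"
    using distortion_thickening_le[OF assms(1,2) R, of "e / 4"] by simp
  ultimately show "\<exists>T \<in> {R. correspondence X Y R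
                  \<and> lsc_setvalued (Metric_space.mtopology X dX) (Metric_space.mtopology Y dY) R
                  \<and> lsc_setvalued (Metric_space.mtopology Y dY) (Metric_space.mtopology X dX) (converse R)}.
        distortion dX dY T \<le> distortion dX dY R + ereal e"
    by blast
qed blast

end
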